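(* If $B,C\in \mathcal{B}_{A}(\mathcal{H})$, then \begin{align*} d\omega _{A_{0}}^{2}\left( \begin{bmatrix} 0 & B \\ C & 0 \end{bmatrix} \right) &\leq \frac{1}{2}\max \left\{ \omega _{A}\left( \left( C^{\sharp _{A}}C\right) ^{2}+C^{\sharp _{A}}C\right) ,\omega _{A}\left( B^{\sharp _{A}}B+ \left( B^{\sharp _{A}}B\right) ^{2} \right) \right\} \\ &\quad+\frac{1}{2}\max \left\{ \omega _{A}\left( \left( C^{\sharp _{A}}C\right) ^{2}-C^{\sharp _{A}}C\right), \omega _{A}\left( B^{\sharp _{A}}B-\left( B^{\sharp _{A}}B\right) ^{2} \right) \right\} \\ &\quad +\omega _{A_{0}}\left( \begin{bmatrix} 0 & C^{\sharp _{A}}CB \\ B^{\sharp _{A}}BC & 0 \end{bmatrix} \right). \end{align*}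
   Context: $\mathcal{H}$ is a complex Hilbert space and $A\in\mathcal{B}(\mathcal{H})$ is a positive operator; $\langle x,z\rangle_A=\langle Ax,z\rangle$ and $\|z\|_A=\|A^{1/2}z\|$. $\mathcal{B}_A(\mathcal{H})$ denotes the set of bounded operators $S$ on $\mathcal{H}$ admitting an $A$-adjoint; $S^{\sharp_A}=A^{\dagger}S^*A$ is the distinguished $A$-adjoint ($A^\dagger$ the Moore-Penrose inverse). $\omega_A(S)=\sup\{|\langle Sz,z\rangle_A|:\|z\|_A=1\}$ is the $A$-numerical radius. $A_0=\begin{bmatrix} A&0\\0&A\end{bmatrix}$ on $\mathcal{H}\oplus\mathcal{H}$ induces $\langle x,z\rangle_{A_0}=\langle x_1,z_1\rangle_A+\langle x_2,z_2\rangle_A$; $\omega_{A_0}$ is the $A_0$-numerical radius and $d\omega_{A_0}(X)=\sup\{(|\langle Xz,z\rangle_{A_0}|^2+\|Xz\|_{A_0}^4)^{1/2}:\|z\|_{A_0}=1\}$ is the $A_0$-Davis-Wielandt radius. *)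

theory Defs
  imports "HOL-Analysis.Analysis"
begin

text \<open>Complex Hilbert spaces (the library has none): an abelian group with a complex
  scalar multiplication and a complex inner product, linear in the first argument,
  complete w.r.t. the induced norm.\<close>

class chilbert = ab_group_add +
  fixes cscale :: "complex \<Rightarrow> 'a \<Rightarrow> 'a"
    and cinner :: "'a \<Rightarrow> 'a \<Rightarrow> complex"
  assumes cscale_add_right: "cscale a (x + y) = cscale a x + cscale a y"
    and cscale_add_left: "cscale (a + b) x = cscale a x + cscale b x"
    and cscale_cscale: "cscale a (cscale b x) = cscale (a * b) x"
    and cscale_one: "cscale 1 x = x"
    and cinner_add_left: "cinner (x + y) z = cinner x z + cinner y z"
    and cinner_cscale_left: "cinner (cscale a x) z = a * cinner x z"
    and cinner_commute: "cinner y x = cnj (cinner x y)"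
    and cinner_nonneg: "0 \<le> Re (cinner x x)"
    and cinner_eq_zero: "cinner x x = 0 \<Longrightarrow> x = 0"
    and complete:
      "(\<forall>e>0. \<exists>N. \<forall>m\<ge>N. \<forall>n\<ge>N. sqrt (Re (cinner (X m - X n) (X m - X n))) < e)
        \<Longrightarrow> \<exists>L. (\<lambda>n. sqrt (Re (cinner (X n - L) (X n - L)))) \<longlonglongrightarrow> 0"

definition cnorm :: "'a::chilbert \<Rightarrow> real" where
  "cnorm x = sqrt (Re (cinner x x))"

definition cbounded_linear :: "('a::chilbert \<Rightarrow> 'a) \<Rightarrow> bool" where
  "cbounded_linear T \<longleftrightarrow>
     (\<forall>x y. T (x + y) = T x + T y) \<and> (\<forall>a x. T (cscale a x) = cscale a (T x)) \<and>
     (\<exists>K. \<forall>x. cnorm (T x) \<le> K * cnorm x)"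

definition positive_op :: "('a::chilbert \<Rightarrow> 'a) \<Rightarrow> bool" where
  "positive_op A \<longleftrightarrow> cbounded_linear A \<and>
     (\<forall>x. Im (cinner (A x) x) = 0 \<and> 0 \<le> Re (cinner (A x) x))"

definition ainner :: "('a::chilbert \<Rightarrow> 'a) \<Rightarrow> 'a \<Rightarrow> 'a \<Rightarrow> complex" where
  "ainner A x z = cinner (A x) z"

definition anorm :: "('a::chilbert \<Rightarrow> 'a) \<Rightarrow> 'a \<Rightarrow> real" where
  "anorm A z = sqrt (Re (ainner A z z))"

definition hadjoint :: "('a::chilbert \<Rightarrow> 'a) \<Rightarrow> 'a \<Rightarrow> 'a" where
  "hadjoint S y = (THE w. \<forall>x. cinner (S x) y = cinner x w)"

text \<open>Moore-Penrose inverse of A, defined on R(A) + R(A)^perp: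
  for y = Ax + w with w \<perp> R(A), A-dagger y is the unique u \<perp> N(A) with Au = Ax.\<close>
definition mp_inv :: "('a::chilbert \<Rightarrow> 'a) \<Rightarrow> 'a \<Rightarrow> 'a" where
  "mp_inv A y = (THE u. \<exists>x w. y = A x + w \<and> (\<forall>v. cinner w (A v) = 0) \<and>
                        A u = A x \<and> (\<forall>k. A k = 0 \<longrightarrow> cinner u k = 0))"

definition has_A_adjoint :: "('a::chilbert \<Rightarrow> 'a) \<Rightarrow> ('a \<Rightarrow> 'a) \<Rightarrow> bool" where
  "has_A_adjoint A S \<longleftrightarrow> cbounded_linear S \<and>
     (\<exists>W. cbounded_linear W \<and> (\<forall>x y. ainner A (S x) y = ainner A x (W y)))"

definition sharpA :: "('a::chilbert \<Rightarrow> 'a) \<Rightarrow> ('a \<Rightarrow> 'a) \<Rightarrow> 'a \<Rightarrow> 'a" where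
  "sharpA A S = (\<lambda>z. mp_inv A (hadjoint S (A z)))"

text \<open>A-numerical radius (supremum of nonnegative reals; convention sup of empty set = 0).\<close>
definition omegaA :: "('a::chilbert \<Rightarrow> 'a) \<Rightarrow> ('a \<Rightarrow> 'a) \<Rightarrow> real" where
  "omegaA A T = Sup (insert 0 {cmod (ainner A (T z) z) | z. anorm A z = 1})"

text \<open>H \<oplus> H is modelled as 'a \<times> 'a, with A_0 = diag(A, A).\<close>
definition a0inner :: "('a::chilbert \<Rightarrow> 'a) \<Rightarrow> 'a \<times> 'a \<Rightarrow> 'a \<times> 'a \<Rightarrow> complex" where
  "a0inner A x z = ainner A (fst x) (fst z) + ainner A (snd x) (snd z)"

definition a0norm :: "('a::chilbert \<Rightarrow> 'a) \<Rightarrow> 'a \<times> 'a \<Rightarrow> real" where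
  "a0norm A z = sqrt (Re (a0inner A z z))"

definition omegaA0 :: "('a::chilbert \<Rightarrow> 'a) \<Rightarrow> ('a \<times> 'a \<Rightarrow> 'a \<times> 'a) \<Rightarrow> real" where
  "omegaA0 A X = Sup (insert 0 {cmod (a0inner A (X z) z) | z. a0norm A z = 1})"

definition dwA0 :: "('a::chilbert \<Rightarrow> 'a) \<Rightarrow> ('a \<times> 'a \<Rightarrow> 'a \<times> 'a) \<Rightarrow> real" where
  "dwA0 A X = Sup (insert 0 {sqrt ((cmod (a0inner A (X z) z))\<^sup>2 + (a0norm A (X z))^4)
                              | z. a0norm A z = 1})"

definition offdiag :: "('a \<Rightarrow> 'a) \<Rightarrow> ('a \<Rightarrow> 'a) \<Rightarrow> 'a \<times> 'a \<Rightarrow> 'a \<times> 'a" where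
  "offdiag B C = (\<lambda>(x1, x2). (B x2, C x1))"

end

(*
  Write z = (x1, x2) with ||x1||_A^2 + ||x2||_A^2 = 1 and put P = C^#C, Q = B^#B.
  Bombieri's inequality |<a,e>|^2 + |<b,e>|^2 <= max (||a||^2) (||b||^2) + |<a,b>| for a unit
  vector e, applied in H (+) H to a = [0 B; C 0] z, b = (P x1, Q x2) and e = z, is exactly the
  claimed pointwise bound: <b,z> = ||a||^2, and <a,b> is the quadratic form of
  [0 PB; QC 0] at z. It remains to split max u v = (u + v)/2 + |u - v|/2 for
  u = ||C x1||^2 + ||B x2||^2 and v = ||P x1||^2 + ||Q x2||^2, which are values of the quadratic
  forms of P, P^2 at x1 and of Q, Q^2 at x2, bounded by the numerical radii of P^2 +- P and
  Q +- Q^2 times ||x1||^2 and ||x2||^2.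

  Two analytic facts make this work. A^+ A is the orthogonal projection onto (ker A)^perp,
  which exists by completeness (nearest points in ker A); hence S^# is linear with
  <S^# u, w>_A = <u, S w>_A. And every S with an A-adjoint W is A-bounded: iterating
  Cauchy-Schwarz along the powers of the A-selfadjoint operator W S bounds its A-norm by its
  ordinary norm, so all radii involved are finite.
*)

theory Submission
  imports Defs
begin

section \<open>Semi-inner products\<close>

lemma quadratic_nonneg_imp_le:
  fixes a b c :: real
  assumes "0 \<le> b" and "0 \<le> c" and nonneg: "\<And>t. 0 \<le> a - 2*t*b + t\<^sup>2*b*c"
  shows "b \<le> a * c"
proof (cases "c = 0")
  case True
  have "0 \<le> a - 2*((a+1)/(2*b))*b + ((a+1)/(2*b))\<^sup>2*b*c" by (rule nonneg)
  with True show ?thesis by (cases "b = 0") (auto simp: field_simps)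
next
  case False
  with \<open>0 \<le> c\<close> have "0 < c" by simp
  have "0 \<le> a - 2*(1/c)*b + (1/c)\<^sup>2*b*c" by (rule nonneg)
  with \<open>0 < c\<close> show ?thesis by (simp add: field_simps power2_eq_square)
qed

lemma cnj_mult_self: "cnj z * z = complex_of_real ((cmod z)\<^sup>2)"
  by (metis complex_norm_square mult.commute)

locale semi_inner =
  fixes ip :: "'v::ab_group_add \<Rightarrow> 'v \<Rightarrow> complex" and sc :: "complex \<Rightarrow> 'v \<Rightarrow> 'v"
  assumes add_left: "ip (x + y) z = ip x z + ip y z"
    and scale_left: "ip (sc a x) z = a * ip x z"
    and hermitian: "ip y x = cnj (ip x y)"
    and nonneg: "0 \<le> Re (ip x x)"
begin

definition seminorm :: "'v \<Rightarrow> real" where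
  "seminorm x = sqrt (Re (ip x x))"

lemma add_right: "ip z (x + y) = ip z x + ip z y"
  by (metis add_left hermitian complex_cnj_add)

lemma scale_right: "ip z (sc a x) = cnj a * ip z x"
  by (metis scale_left hermitian complex_cnj_mult)

lemma diff_left: "ip (x - y) z = ip x z - ip y z"
  using add_left[of "x - y" y z] by simp

lemma diff_right: "ip z (x - y) = ip z x - ip z y"
  by (metis diff_left hermitian complex_cnj_diff)

lemma zero_left [simp]: "ip 0 z = 0"
  using diff_left[of 0 0 z] by simp

lemma zero_right [simp]: "ip z 0 = 0"
  using diff_right[of z 0 0] by simp

lemma self_eq_Re: "ip x x = complex_of_real (Re (ip x x))"
  using hermitian[of x x] by (simp add: complex_eq_iff)

lemma seminorm_nonneg [simp]: "0 \<le> seminorm x"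
  by (simp add: seminorm_def nonneg)

lemma seminorm_sq: "(seminorm x)\<^sup>2 = Re (ip x x)"
  by (simp add: seminorm_def nonneg)

lemma Re_scale_self: "Re (ip (sc a x) (sc a x)) = (cmod a)\<^sup>2 * Re (ip x x)"
proof -
  have "ip (sc a x) (sc a x) = (a * cnj a) * ip x x"
    by (simp add: scale_left scale_right)
  then show ?thesis
    by (simp flip: complex_norm_square)
qed

lemma seminorm_scale: "seminorm (sc a x) = cmod a * seminorm x"
  by (simp add: seminorm_def Re_scale_self real_sqrt_mult)

lemma Re_self_add_scale:
  "Re (ip (x + sc q y) (x + sc q y)) = Re (ip x x) + 2 * Re (cnj q * ip x y) + (cmod q)\<^sup>2 * Re (ip y y)"
proof -
  have "ip (x + sc q y) (x + sc q y) = ip x x + (cnj q * ip x y + cnj (cnj q * ip x y)) + ip (sc q y) (sc q y)"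
    by (simp add: add_left add_right scale_left scale_right hermitian[of x y] distrib_left)
  then show ?thesis
    by (simp add: Re_scale_self)
qed

lemma Re_self_add_scale_cross:
  "Re (ip (x + sc (- (complex_of_real t * ip x y)) y) (x + sc (- (complex_of_real t * ip x y)) y))
     = Re (ip x x) - 2*t*(cmod (ip x y))\<^sup>2 + t\<^sup>2 * (cmod (ip x y))\<^sup>2 * Re (ip y y)"
proof -
  have "cnj (- (complex_of_real t * ip x y)) * ip x y = - complex_of_real (t * (cmod (ip x y))\<^sup>2)"
    using cnj_mult_self[of "ip x y"] by (simp add: mult.assoc)
  moreover have "(cmod (- (complex_of_real t * ip x y)))\<^sup>2 = t\<^sup>2 * (cmod (ip x y))\<^sup>2"
    by (simp add: norm_mult power_mult_distrib)
  ultimately show ?thesis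
    by (simp only: Re_self_add_scale) simp
qed

lemma cauchy_schwarz_sq: "(cmod (ip x y))\<^sup>2 \<le> Re (ip x x) * Re (ip y y)"
proof (rule quadratic_nonneg_imp_le)
  show "0 \<le> Re (ip x x) - 2*t*(cmod (ip x y))\<^sup>2 + t\<^sup>2 * (cmod (ip x y))\<^sup>2 * Re (ip y y)" for t
    using nonneg by (simp flip: Re_self_add_scale_cross)
qed (use nonneg in auto)

lemma cauchy_schwarz: "cmod (ip x y) \<le> seminorm x * seminorm y"
  unfolding seminorm_def
  by (metis cauchy_schwarz_sq real_le_rsqrt real_sqrt_mult)

lemma orthogonal_if_minimal:
  assumes "\<And>a. Re (ip x x) \<le> Re (ip (x + sc a y) (x + sc a y))"
  shows "ip x y = 0"
proof -
  have "(cmod (ip x y))\<^sup>2 \<le> 0 * Re (ip y y)"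
  proof (rule quadratic_nonneg_imp_le)
    show "0 \<le> 0 - 2*t*(cmod (ip x y))\<^sup>2 + t\<^sup>2 * (cmod (ip x y))\<^sup>2 * Re (ip y y)" for t
      using assms[of "- (complex_of_real t * ip x y)"] by (simp add: Re_self_add_scale_cross)
  qed (use nonneg in auto)
  then show ?thesis by simp
qed

lemma Re_self_add: "Re (ip (x + y) (x + y)) = Re (ip x x) + Re (ip y y) + 2 * Re (ip x y)"
proof -
  have "ip (x + y) (x + y) = ip x x + ip y y + (ip x y + cnj (ip x y))"
    by (simp add: add_left add_right hermitian[of x y])
  then show ?thesis
    by simp
qed

lemma seminorm_triangle: "seminorm (x + y) \<le> seminorm x + seminorm y"
proof -
  have "Re (ip x y) \<le> seminorm x * seminorm y"
    using cauchy_schwarz[of x y] complex_Re_le_cmod[of "ip x y"] by linarith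
  then have "(seminorm (x + y))\<^sup>2 \<le> (seminorm x + seminorm y)\<^sup>2"
    unfolding power2_sum seminorm_sq Re_self_add by linarith
  then show ?thesis
    by (rule power2_le_imp_le) simp
qed

lemma parallelogram:
  "Re (ip (x + y) (x + y)) + Re (ip (x - y) (x - y)) = 2 * Re (ip x x) + 2 * Re (ip y y)"
  by (simp add: add_left add_right diff_left diff_right)

lemma seminorm_diff_le: "seminorm (x - y) \<le> seminorm x + seminorm y"
proof -
  have "seminorm (- y) = seminorm y"
    using diff_left[of 0 y] diff_right[of _ 0 y] by (simp add: seminorm_def)
  then show ?thesis
    using seminorm_triangle[of x "- y"] by simp
qed

text \<open>Bombieri's generalization of the Buzano inequality, for two vectors: test
  the vector v = \<langle>e,a\<rangle> a + \<langle>e,b\<rangle> b against e with Cauchy-Schwarz.\<close>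
lemma bombieri:
  assumes e: "Re (ip e e) = 1"
  shows "(cmod (ip a e))\<^sup>2 + (cmod (ip b e))\<^sup>2 \<le> max (Re (ip a a)) (Re (ip b b)) + cmod (ip a b)"
proof -
  define p where "p = cnj (ip a e)"
  define q where "q = cnj (ip b e)"
  define s where "s = (cmod p)\<^sup>2 + (cmod q)\<^sup>2"
  define v where "v = sc p a + sc q b"
  define M where "M = max (Re (ip a a)) (Re (ip b b))"
  define K where "K = cmod (ip a b)"
  have "ip v e = complex_of_real s"
    by (simp add: v_def s_def p_def q_def add_left scale_left cnj_mult_self)
  moreover have "0 \<le> s"
    by (simp add: s_def)
  ultimately have "s \<le> seminorm v"
    using cauchy_schwarz[of v e] e by (simp add: seminorm_def)
  with \<open>0 \<le> s\<close> have s_sq: "s\<^sup>2 \<le> Re (ip v v)"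
    by (metis power_mono seminorm_sq)
  have "Re (ip v v) = (cmod p)\<^sup>2 * Re (ip a a) + (cmod q)\<^sup>2 * Re (ip b b) + 2 * Re (p * cnj q * ip a b)"
  proof -
    have "ip (sc p a) (sc q b) = p * cnj q * ip a b"
      by (simp add: scale_left scale_right)
    then show ?thesis
      unfolding v_def Re_self_add Re_scale_self by simp
  qed
  also have "2 * Re (p * cnj q * ip a b) \<le> 2 * (cmod p * cmod q) * K"
    using complex_Re_le_cmod[of "p * cnj q * ip a b"] by (simp add: K_def norm_mult)
  also have "\<dots> \<le> s * K"
    using sum_squares_bound[of "cmod p" "cmod q"] by (simp add: s_def K_def mult_right_mono)
  also have "(cmod p)\<^sup>2 * Re (ip a a) + (cmod q)\<^sup>2 * Re (ip b b) \<le> s * M"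
    by (simp add: s_def M_def distrib_right add_mono mult_left_mono)
  finally have "s\<^sup>2 \<le> s * (M + K)"
    using s_sq by (simp add: distrib_left)
  moreover have "0 \<le> M + K"
    using nonneg[of a] by (simp add: M_def K_def)
  ultimately have "s \<le> M + K"
    using \<open>0 \<le> s\<close> by (cases "s = 0") (auto simp: power2_eq_square mult_le_cancel_left_pos)
  then show ?thesis
    by (simp add: s_def p_def q_def M_def K_def)
qed

end

section \<open>Bounded operators and nearest points\<close>

interpretation cinner: semi_inner "cinner :: 'a::chilbert \<Rightarrow> 'a \<Rightarrow> complex" cscale
  by unfold_locales (auto simp: cinner_add_left cinner_cscale_left cinner_nonneg intro: cinner_commute)

lemma cnorm_eq_seminorm: "cnorm = cinner.seminorm"
  by (simp add: fun_eq_iff cnorm_def cinner.seminorm_def)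

lemma cnorm_eq_zeroD: "cnorm x = 0 \<Longrightarrow> x = 0"
  by (metis cinner.self_eq_Re cinner_eq_zero cnorm_eq_seminorm cinner.seminorm_sq
      of_real_0 zero_power2)

lemma cnorm_nonneg [simp]: "0 \<le> cnorm x"
  by (simp add: cnorm_eq_seminorm)

lemma cnorm_diff_commute: "cnorm (x - y) = cnorm (y - x)"
  by (simp add: cnorm_def cinner.diff_left cinner.diff_right algebra_simps)

lemma cscale_diff: "cscale a (x - y) = cscale a x - cscale a y"
  using cscale_add_right[of a "x - y" y] by (simp add: eq_diff_eq)

lemma cscale_zero [simp]: "cscale a 0 = 0"
  using cscale_diff[of a 0 0] by simp

lemma cnorm_triangle: "cnorm (x + y) \<le> cnorm x + cnorm y"
  by (simp add: cnorm_eq_seminorm cinner.seminorm_triangle)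

lemma cbounded_linear_add: "cbounded_linear T \<Longrightarrow> T (x + y) = T x + T y"
  by (simp add: cbounded_linear_def)

lemma cbounded_linear_cscale: "cbounded_linear T \<Longrightarrow> T (cscale a x) = cscale a (T x)"
  by (simp add: cbounded_linear_def)

lemma cbounded_linear_diff: "cbounded_linear T \<Longrightarrow> T (x - y) = T x - T y"
  using cbounded_linear_add[of T "x - y" y] by (simp add: eq_diff_eq)

lemma cbounded_linear_zero: "cbounded_linear T \<Longrightarrow> T 0 = 0"
  using cbounded_linear_diff[of T 0 0] by simp

lemma cbounded_linear_pos_bound:
  assumes "cbounded_linear T"
  obtains K where "0 < K" and "\<And>x. cnorm (T x) \<le> K * cnorm x"
proof -
  obtain K where K: "\<And>x. cnorm (T x) \<le> K * cnorm x"
    using assms by (auto simp: cbounded_linear_def)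
  have "cnorm (T x) \<le> (max K 0 + 1) * cnorm x" for x
  proof -
    have "K * cnorm x \<le> (max K 0 + 1) * cnorm x"
      by (intro mult_right_mono) auto
    with K show ?thesis
      by (rule order_trans)
  qed
  then show thesis
    by (rule that[rotated]) simp
qed

lemma cbounded_linear_comp:
  assumes S: "cbounded_linear S" and T: "cbounded_linear T"
  shows "cbounded_linear (S \<circ> T)"
proof -
  obtain K1 where K1: "0 < K1" "\<And>x. cnorm (S x) \<le> K1 * cnorm x"
    using cbounded_linear_pos_bound[OF S] by blast
  obtain K2 where K2: "\<And>x. cnorm (T x) \<le> K2 * cnorm x"
    using cbounded_linear_pos_bound[OF T] by blast
  have "cnorm (S (T x)) \<le> (K1 * K2) * cnorm x" for x
    using K1(2)[of "T x"] mult_left_mono[OF K2[of x] less_imp_le[OF K1(1)]] by (simp add: mult.assoc)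
  with S T show ?thesis
    by (auto simp: cbounded_linear_def)
qed

lemma cnorm_convergent_if_sq_dist_le:
  fixes X :: "nat \<Rightarrow> 'a::chilbert"
  assumes dist: "\<And>m n. (cnorm (X m - X n))\<^sup>2 \<le> e m + e n" and e: "e \<longlonglongrightarrow> 0"
  obtains L where "(\<lambda>n. cnorm (X n - L)) \<longlonglongrightarrow> 0"
proof -
  have "\<exists>N. \<forall>m\<ge>N. \<forall>n\<ge>N. cnorm (X m - X n) < r" if "0 < r" for r
  proof -
    obtain N where N: "\<And>n. N \<le> n \<Longrightarrow> e n < r\<^sup>2 / 2"
      using order_tendstoD(2)[OF e, of "r\<^sup>2 / 2"] \<open>0 < r\<close> by (auto simp: eventually_sequentially)
    have "cnorm (X m - X n) < r" if "N \<le> m" "N \<le> n" for m n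
    proof -
      have "(cnorm (X m - X n))\<^sup>2 < r\<^sup>2"
        using dist[of m n] N[OF \<open>N \<le> m\<close>] N[OF \<open>N \<le> n\<close>] by linarith
      with \<open>0 < r\<close> show ?thesis
        by (simp add: power_less_imp_less_base)
    qed
    then show ?thesis by blast
  qed
  then show thesis
    using complete[of X] that unfolding cnorm_def by blast
qed

lemma midpoint_convex_sq_dist_le:
  fixes u :: "'a::chilbert"
  assumes midpoint: "cscale (1/2) (x + y) \<in> K" and d: "\<And>k. k \<in> K \<Longrightarrow> d \<le> cnorm (u - k)" "0 \<le> d"
  shows "(cnorm (x - y))\<^sup>2 \<le> 2 * ((cnorm (u - x))\<^sup>2 - d\<^sup>2) + 2 * ((cnorm (u - y))\<^sup>2 - d\<^sup>2)"
proof -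
  define w where "w = u - cscale (1/2) (x + y)"
  have "(u - x) + (u - y) = cscale 2 w"
  proof -
    have "cscale 2 w = cscale (1 + 1) u - cscale (2 * (1/2)) (x + y)"
      by (simp add: w_def cscale_diff cscale_cscale)
    moreover have "cscale 2 u = u + u"
      using cscale_add_left[of 1 1 u] by (simp add: cscale_one)
    ultimately show ?thesis
      by (simp add: cscale_one)
  qed
  moreover have "d\<^sup>2 \<le> (cnorm w)\<^sup>2"
    using d midpoint by (simp add: w_def power_mono)
  ultimately have "4 * d\<^sup>2 \<le> (cnorm ((u - x) + (u - y)))\<^sup>2"
    by (simp add: cnorm_eq_seminorm cinner.seminorm_scale power_mult_distrib)
  moreover have "(cnorm (x - y))\<^sup>2 = Re (cinner ((u - x) - (u - y)) ((u - x) - (u - y)))"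
    using cnorm_diff_commute[of x y] by (simp add: cnorm_def cinner_nonneg)
  ultimately show ?thesis
    using cinner.parallelogram[of "u - x" "u - y"]
    by (simp add: cnorm_eq_seminorm cinner.seminorm_sq)
qed

lemma minimizing_sequence_limit:
  fixes K :: "'a::chilbert set" and u :: 'a
  assumes midpoint: "\<And>x y. x \<in> K \<Longrightarrow> y \<in> K \<Longrightarrow> cscale (1/2) (x + y) \<in> K"
    and closed: "\<And>X L. (\<And>n. X n \<in> K) \<Longrightarrow> (\<lambda>n. cnorm (X n - L)) \<longlonglongrightarrow> 0 \<Longrightarrow> L \<in> K"
    and d_le: "\<And>k. k \<in> K \<Longrightarrow> d \<le> cnorm (u - k)" and "0 \<le> d"
    and e: "e \<longlonglongrightarrow> 0" "\<And>n. 0 < e n" "\<And>n. e n \<le> 1"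
    and X: "\<And>n. X n \<in> K" and X_near: "\<And>n. cnorm (u - X n) < d + e n"
  obtains L where "L \<in> K" and "cnorm (u - L) \<le> d"
proof -
  have excess: "(cnorm (u - X n))\<^sup>2 - d\<^sup>2 \<le> (2 * d + 1) * e n" for n
  proof -
    have "(e n)\<^sup>2 \<le> e n"
      using e(2,3)[of n] by (simp add: power2_eq_square mult_left_le_one_le)
    moreover have "(cnorm (u - X n))\<^sup>2 \<le> (d + e n)\<^sup>2"
      using X_near[of n] by (intro power_mono) auto
    moreover have "(d + e n)\<^sup>2 = d\<^sup>2 + (e n)\<^sup>2 + 2 * d * e n"
      by (rule power2_sum)
    moreover have "(2 * d + 1) * e n = 2 * d * e n + e n"
      by (simp add: algebra_simps)
    ultimately show ?thesis
      by linarith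
  qed
  have "(cnorm (X m - X n))\<^sup>2 \<le> 2 * ((2 * d + 1) * e m) + 2 * ((2 * d + 1) * e n)" for m n
  proof -
    have "(cnorm (X m - X n))\<^sup>2 \<le> 2 * ((cnorm (u - X m))\<^sup>2 - d\<^sup>2) + 2 * ((cnorm (u - X n))\<^sup>2 - d\<^sup>2)"
      using midpoint[OF X X] d_le \<open>0 \<le> d\<close> by (rule midpoint_convex_sq_dist_le)
    with excess[of m] excess[of n] show ?thesis
      by argo
  qed
  moreover have "(\<lambda>n. 2 * ((2 * d + 1) * e n)) \<longlonglongrightarrow> 0"
    using e(1) by (intro tendsto_mult_right_zero)
  ultimately obtain L where L: "(\<lambda>n. cnorm (X n - L)) \<longlonglongrightarrow> 0"
    by (rule cnorm_convergent_if_sq_dist_le)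
  have "(\<lambda>n. d + e n + cnorm (X n - L)) \<longlonglongrightarrow> d + 0 + 0"
    by (intro tendsto_add tendsto_const e(1) L)
  moreover have "cnorm (u - L) \<le> d + e n + cnorm (X n - L)" for n
    using cnorm_triangle[of "u - X n" "X n - L"] X_near[of n] by simp
  ultimately have "cnorm (u - L) \<le> d + 0 + 0"
    by (intro LIMSEQ_le_const) auto
  with closed[OF X L] show thesis
    using that by simp
qed

lemma nearest_point_exists:
  fixes K :: "'a::chilbert set" and u :: 'a
  assumes "K \<noteq> {}"
    and midpoint: "\<And>x y. x \<in> K \<Longrightarrow> y \<in> K \<Longrightarrow> cscale (1/2) (x + y) \<in> K"
    and closed: "\<And>X L. (\<And>n. X n \<in> K) \<Longrightarrow> (\<lambda>n. cnorm (X n - L)) \<longlonglongrightarrow> 0 \<Longrightarrow> L \<in> K"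
  obtains L where "L \<in> K" and "\<And>k. k \<in> K \<Longrightarrow> cnorm (u - L) \<le> cnorm (u - k)"
proof -
  define d where "d = (INF k\<in>K. cnorm (u - k))"
  have bdd: "bdd_below ((\<lambda>k. cnorm (u - k)) ` K)"
    by (rule bdd_belowI2[of _ 0]) simp
  have d_le: "d \<le> cnorm (u - k)" if "k \<in> K" for k
    unfolding d_def using bdd that by (rule cINF_lower)
  have "0 \<le> d"
    unfolding d_def using \<open>K \<noteq> {}\<close> by (intro cINF_greatest) auto
  have "\<exists>k\<in>K. cnorm (u - k) < d + inverse (real (Suc n))" for n
  proof -
    have "d < d + inverse (real (Suc n))"
      by simp
    then show ?thesis
      unfolding d_def by (simp only: cINF_less_iff[OF \<open>K \<noteq> {}\<close> bdd])
  qed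
  then obtain X where X: "\<And>n. X n \<in> K" and X_near: "\<And>n. cnorm (u - X n) < d + inverse (real (Suc n))"
    by metis
  have "0 < inverse (real (Suc n))" and "inverse (real (Suc n)) \<le> 1" for n
    by (simp_all add: inverse_le_1_iff)
  from minimizing_sequence_limit[OF midpoint closed d_le \<open>0 \<le> d\<close> LIMSEQ_inverse_real_of_nat this X X_near]
  obtain L where "L \<in> K" and "cnorm (u - L) \<le> d" .
  with d_le show thesis
    using that by fastforce
qed

lemma cbounded_linear_kernel_closed:
  assumes A: "cbounded_linear A" and X: "\<And>n. A (X n) = 0" and L: "(\<lambda>n. cnorm (X n - L)) \<longlonglongrightarrow> 0"
  shows "A L = 0"
proof -
  obtain K where K: "0 < K" "\<And>x. cnorm (A x) \<le> K * cnorm x"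
    using cbounded_linear_pos_bound[OF A] by blast
  have "cnorm (A L) \<le> K * cnorm (X n - L)" for n
    using K(2)[of "L - X n"] X[of n] cbounded_linear_diff[OF A, of L "X n"]
    by (simp add: cnorm_diff_commute)
  moreover have "(\<lambda>n. K * cnorm (X n - L)) \<longlonglongrightarrow> 0"
    using L by (rule tendsto_mult_right_zero)
  ultimately have "cnorm (A L) \<le> 0"
    by (intro LIMSEQ_le_const[of _ 0]) auto
  then show ?thesis
    using cnorm_eq_zeroD cnorm_nonneg by (metis order_antisym)
qed

text \<open>The witness is u minus its nearest point in the kernel.\<close>
lemma kernel_orthogonal_representative:
  fixes A :: "'a::chilbert \<Rightarrow> 'a"
  assumes A: "cbounded_linear A"
  obtains v where "A v = A u" and "\<And>k. A k = 0 \<Longrightarrow> cinner v k = 0"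
proof -
  let ?K = "{k. A k = 0}"
  obtain L where "A L = 0" and L: "\<And>k. A k = 0 \<Longrightarrow> cnorm (u - L) \<le> cnorm (u - k)"
  proof (rule nearest_point_exists[of ?K])
    show "?K \<noteq> {}"
      using cbounded_linear_zero[OF A] by auto
    show "cscale (1/2) (x + y) \<in> ?K" if "x \<in> ?K" "y \<in> ?K" for x y
      using that by (simp add: cbounded_linear_cscale[OF A] cbounded_linear_add[OF A])
    show "L \<in> ?K" if "\<And>n. X n \<in> ?K" "(\<lambda>n. cnorm (X n - L)) \<longlonglongrightarrow> 0" for X L
      using cbounded_linear_kernel_closed[OF A] that by auto
  qed auto
  show thesis
  proof (rule that)
    show "A (u - L) = A u"
      using \<open>A L = 0\<close> by (simp add: cbounded_linear_diff[OF A])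
    show "cinner (u - L) k = 0" if "A k = 0" for k
    proof (rule cinner.orthogonal_if_minimal)
      fix a
      have "A (L - cscale a k) = 0"
        using \<open>A L = 0\<close> \<open>A k = 0\<close> by (simp add: cbounded_linear_diff[OF A] cbounded_linear_cscale[OF A])
      then have "cnorm (u - L) \<le> cnorm (u - L + cscale a k)"
        using L[of "L - cscale a k"] by (simp add: algebra_simps)
      then show "Re (cinner (u - L) (u - L)) \<le> Re (cinner (u - L + cscale a k) (u - L + cscale a k))"
        by (simp add: cnorm_eq_seminorm flip: cinner.seminorm_sq)
    qed
  qed
qed

section \<open>The Moore-Penrose inverse on the range\<close>

lemma mp_inv_eqI:
  fixes A :: "'a::chilbert \<Rightarrow> 'a"
  assumes A: "cbounded_linear A" and "A u = A v" and orth: "\<And>k. A k = 0 \<Longrightarrow> cinner u k = 0"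
  shows "mp_inv A (A v) = u"
  unfolding mp_inv_def
proof (rule the_equality)
  show "\<exists>x w. A v = A x + w \<and> (\<forall>y. cinner w (A y) = 0) \<and> A u = A x \<and> (\<forall>k. A k = 0 \<longrightarrow> cinner u k = 0)"
    by (rule exI[of _ v], rule exI[of _ 0]) (use assms in auto)
next
  fix u'
  assume "\<exists>x w. A v = A x + w \<and> (\<forall>y. cinner w (A y) = 0) \<and> A u' = A x \<and> (\<forall>k. A k = 0 \<longrightarrow> cinner u' k = 0)"
  then obtain x w where w: "A v = A x + w" "\<forall>y. cinner w (A y) = 0"
    and u': "A u' = A x" "\<And>k. A k = 0 \<Longrightarrow> cinner u' k = 0"
    by blast
  have "w = A (v - x)"
    using w(1) by (simp add: cbounded_linear_diff[OF A])
  with w(2) have "w = 0"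
    using cinner_eq_zero by metis
  with w(1) u'(1) \<open>A u = A v\<close> have "A (u' - u) = 0"
    by (simp add: cbounded_linear_diff[OF A])
  then have "cinner (u' - u) (u' - u) = 0"
    using u'(2) orth by (simp add: cinner.diff_left)
  then show "u' = u"
    using cinner_eq_zero by fastforce
qed

lemma mp_inv_of_range:
  fixes A :: "'a::chilbert \<Rightarrow> 'a"
  assumes A: "cbounded_linear A"
  shows "A (mp_inv A (A v)) = A v"
    and "A k = 0 \<Longrightarrow> cinner (mp_inv A (A v)) k = 0"
proof -
  obtain u where "A u = A v" and "\<And>k. A k = 0 \<Longrightarrow> cinner u k = 0"
    using kernel_orthogonal_representative[OF A] by blast
  moreover from this have "mp_inv A (A v) = u"
    by (rule mp_inv_eqI[OF A])
  ultimately show "A (mp_inv A (A v)) = A v" and "A k = 0 \<Longrightarrow> cinner (mp_inv A (A v)) k = 0"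
    by simp_all
qed

lemma mp_inv_cscale:
  fixes A :: "'a::chilbert \<Rightarrow> 'a"
  assumes A: "cbounded_linear A"
  shows "mp_inv A (A (cscale a v)) = cscale a (mp_inv A (A v))"
  by (rule mp_inv_eqI)
    (simp_all add: A cbounded_linear_cscale[OF A] mp_inv_of_range[OF A] cinner_cscale_left)

section \<open>The distinguished A-adjoint\<close>

lemma positive_op_cbounded_linear: "positive_op A \<Longrightarrow> cbounded_linear A"
  by (simp add: positive_op_def)

text \<open>Polarization: the real quadratic form of A forces the imaginary parts, and the
  substitution x := i x the real parts, of the two cross terms to agree.\<close>
lemma positive_op_selfadjoint:
  assumes A: "positive_op A"
  shows "cinner (A x) y = cinner x (A y)"
proof -
  have lin: "cbounded_linear A"
    using A by (rule positive_op_cbounded_linear)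
  have real: "Im (cinner (A x) x) = 0" for x
    using A by (simp add: positive_op_def)
  have cross: "Im (cinner (A x) y + cinner (A y) x) = 0" for x y
  proof -
    have "cinner (A (x + y)) (x + y) = cinner (A x) x + cinner (A y) y + (cinner (A x) y + cinner (A y) x)"
      by (simp add: cbounded_linear_add[OF lin] cinner.add_left cinner.add_right algebra_simps)
    then show ?thesis
      using real[of "x + y"] real[of x] real[of y] by simp
  qed
  have "Re (cinner (A x) y) = Re (cinner (A y) x)"
    using cross[of "cscale \<i> x" y]
    by (simp add: cbounded_linear_cscale[OF lin] cinner_cscale_left cinner.scale_right)
  with cross[of x y] have "cinner (A x) y = cnj (cinner (A y) x)"
    by (simp add: complex_eq_iff)
  then show ?thesis
    by (metis cinner_commute)
qed

lemma semi_inner_ainner: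
  assumes A: "positive_op A"
  shows "semi_inner (ainner A) cscale"
proof
  have lin: "cbounded_linear A"
    using A by (rule positive_op_cbounded_linear)
  fix x y z :: 'a and a
  show "ainner A (x + y) z = ainner A x z + ainner A y z"
    by (simp add: ainner_def cbounded_linear_add[OF lin] cinner.add_left)
  show "ainner A (cscale a x) z = a * ainner A x z"
    by (simp add: ainner_def cbounded_linear_cscale[OF lin] cinner_cscale_left)
  show "ainner A y x = cnj (ainner A x y)"
    by (metis ainner_def cinner_commute positive_op_selfadjoint[OF A])
  show "0 \<le> Re (ainner A x x)"
    using A by (simp add: positive_op_def ainner_def)
qed

lemma semi_inner_a0inner:
  assumes A: "positive_op A"
  shows "semi_inner (a0inner A) (\<lambda>a z. (cscale a (fst z), cscale a (snd z)))"
proof -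
  interpret a: semi_inner "ainner A" cscale
    using A by (rule semi_inner_ainner)
  show ?thesis
  proof
    fix x y z :: "'a \<times> 'a" and a
    show "a0inner A (x + y) z = a0inner A x z + a0inner A y z"
      by (simp add: a0inner_def a.add_left)
    show "a0inner A (cscale a (fst x), cscale a (snd x)) z = a * a0inner A x z"
      by (simp add: a0inner_def a.scale_left distrib_left)
    show "a0inner A y x = cnj (a0inner A x y)"
      by (simp add: a0inner_def a.hermitian[of "fst y" "fst x"] a.hermitian[of "snd y" "snd x"])
    show "0 \<le> Re (a0inner A x x)"
      by (simp add: a0inner_def a.nonneg add_nonneg_nonneg)
  qed
qed

lemma anorm_eq_seminorm: "positive_op A \<Longrightarrow> anorm A = semi_inner.seminorm (ainner A)"
  by (simp add: fun_eq_iff anorm_def semi_inner.seminorm_def[OF semi_inner_ainner])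

lemma a0norm_eq_seminorm: "positive_op A \<Longrightarrow> a0norm A = semi_inner.seminorm (a0inner A)"
  by (simp add: fun_eq_iff a0norm_def semi_inner.seminorm_def[OF semi_inner_a0inner])

lemma hadjoint_A_eq:
  assumes A: "positive_op A" and W: "\<And>x y. ainner A (S x) y = ainner A x (W y)"
  shows "hadjoint S (A v) = A (W v)"
  unfolding hadjoint_def
proof (rule the_equality)
  show adj: "\<forall>x. cinner (S x) (A v) = cinner x (A (W v))"
    using W by (simp add: ainner_def positive_op_selfadjoint[OF A])
  fix w
  assume "\<forall>x. cinner (S x) (A v) = cinner x w"
  with adj have "cinner x w = cinner x (A (W v))" for x
    by simp
  then have "cinner (w - A (W v)) (w - A (W v)) = 0"
    by (simp add: cinner.diff_right)
  then show "w = A (W v)"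
    using cinner_eq_zero by fastforce
qed

lemma sharpA_eq_mp_inv:
  assumes "positive_op A" and "\<And>x y. ainner A (S x) y = ainner A x (W y)"
  shows "sharpA A S v = mp_inv A (A (W v))"
  by (simp add: sharpA_def hadjoint_A_eq[OF assms])

lemma A_sharpA:
  assumes A: "positive_op A" and W: "\<And>x y. ainner A (S x) y = ainner A x (W y)"
  shows "A (sharpA A S v) = A (W v)"
  by (simp add: sharpA_eq_mp_inv[OF A W] mp_inv_of_range positive_op_cbounded_linear[OF A])

lemma ainner_sharpA_left:
  assumes A: "positive_op A" and S: "has_A_adjoint A S"
  shows "ainner A (sharpA A S v) w = ainner A v (S w)"
proof -
  interpret a: semi_inner "ainner A" cscale
    using A by (rule semi_inner_ainner)
  obtain W where W: "\<And>x y. ainner A (S x) y = ainner A x (W y)"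
    using S by (auto simp: has_A_adjoint_def)
  have "ainner A (sharpA A S v) w = ainner A (W v) w"
    by (simp add: ainner_def A_sharpA[OF A W])
  also have "\<dots> = ainner A v (S w)"
    by (metis W a.hermitian)
  finally show ?thesis .
qed

lemma ainner_sharpA_right:
  assumes A: "positive_op A" and S: "has_A_adjoint A S"
  shows "ainner A v (sharpA A S w) = ainner A (S v) w"
  by (metis ainner_sharpA_left[OF assms] semi_inner.hermitian[OF semi_inner_ainner[OF A]])

lemma sharpA_cscale:
  assumes A: "positive_op A" and S: "has_A_adjoint A S"
  shows "sharpA A S (cscale a v) = cscale a (sharpA A S v)"
proof -
  obtain W where "cbounded_linear W" and W: "\<And>x y. ainner A (S x) y = ainner A x (W y)"
    using S by (auto simp: has_A_adjoint_def)
  show ?thesis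
    unfolding sharpA_eq_mp_inv[OF A W] cbounded_linear_cscale[OF \<open>cbounded_linear W\<close>]
    by (rule mp_inv_cscale[OF positive_op_cbounded_linear[OF A]])
qed

section \<open>A-bounded operators\<close>

definition A_bounded :: "('a::chilbert \<Rightarrow> 'a) \<Rightarrow> ('a \<Rightarrow> 'a) \<Rightarrow> bool" where
  "A_bounded A T \<longleftrightarrow> (\<exists>c\<ge>0. \<forall>z. anorm A (T z) \<le> c * anorm A z)"

lemma A_boundedE:
  assumes "A_bounded A T"
  obtains c where "0 \<le> c" and "\<And>z. anorm A (T z) \<le> c * anorm A z"
  using assms by (auto simp: A_bounded_def)

lemma A_bounded_comp:
  assumes "A_bounded A S" and "A_bounded A T"
  shows "A_bounded A (\<lambda>z. S (T z))"
proof -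
  obtain c d where "0 \<le> c" "\<And>z. anorm A (S z) \<le> c * anorm A z"
    and "0 \<le> d" "\<And>z. anorm A (T z) \<le> d * anorm A z"
    using assms by (metis A_boundedE)
  then have "anorm A (S (T z)) \<le> (c * d) * anorm A z" for z
    by (metis mult.assoc mult_left_mono order_trans)
  with \<open>0 \<le> c\<close> \<open>0 \<le> d\<close> show ?thesis
    unfolding A_bounded_def by (metis zero_le_mult_iff)
qed

lemma A_bounded_add_diff:
  assumes A: "positive_op A" and "A_bounded A S" and "A_bounded A T"
  shows "A_bounded A (\<lambda>z. S z + T z)" and "A_bounded A (\<lambda>z. S z - T z)"
proof -
  interpret a: semi_inner "ainner A" cscale
    using A by (rule semi_inner_ainner)
  obtain c d where "0 \<le> c" "\<And>z. anorm A (S z) \<le> c * anorm A z"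
    and "0 \<le> d" "\<And>z. anorm A (T z) \<le> d * anorm A z"
    using assms by (metis A_boundedE)
  moreover have "anorm A (S z + T z) \<le> anorm A (S z) + anorm A (T z)"
    and "anorm A (S z - T z) \<le> anorm A (S z) + anorm A (T z)" for z
    by (simp_all add: anorm_eq_seminorm[OF A] a.seminorm_triangle a.seminorm_diff_le)
  moreover from calculation have "anorm A (S z) + anorm A (T z) \<le> (c + d) * anorm A z" for z
    by (simp add: distrib_right add_mono)
  ultimately have "anorm A (S z + T z) \<le> (c + d) * anorm A z"
    and "anorm A (S z - T z) \<le> (c + d) * anorm A z" for z
    by (meson order_trans)+
  with \<open>0 \<le> c\<close> \<open>0 \<le> d\<close> show "A_bounded A (\<lambda>z. S z + T z)" and "A_bounded A (\<lambda>z. S z - T z)"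
    unfolding A_bounded_def by (metis add_nonneg_nonneg)+
qed

lemma A_bounded_sharpA:
  assumes A: "positive_op A" and S: "has_A_adjoint A S" and "A_bounded A S"
  shows "A_bounded A (sharpA A S)"
proof -
  interpret a: semi_inner "ainner A" cscale
    using A by (rule semi_inner_ainner)
  obtain c where "0 \<le> c" and c: "\<And>z. anorm A (S z) \<le> c * anorm A z"
    using assms by (metis A_boundedE)
  have "anorm A (sharpA A S v) \<le> c * anorm A v" for v
  proof -
    let ?w = "sharpA A S v"
    have "(anorm A ?w)\<^sup>2 = Re (ainner A v (S ?w))"
      by (simp add: anorm_eq_seminorm[OF A] a.seminorm_sq ainner_sharpA_left[OF A S])
    also have "\<dots> \<le> anorm A v * anorm A (S ?w)"
      using a.cauchy_schwarz complex_Re_le_cmod by (metis anorm_eq_seminorm[OF A] order_trans)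
    also have "\<dots> \<le> anorm A v * (c * anorm A ?w)"
      using c by (simp add: anorm_eq_seminorm[OF A] mult_left_mono)
    finally have sq: "anorm A ?w * anorm A ?w \<le> (c * anorm A v) * anorm A ?w"
      by (simp add: power2_eq_square mult_ac)
    show ?thesis
    proof (cases "anorm A ?w = 0")
      case True
      with \<open>0 \<le> c\<close> show ?thesis
        by (simp add: anorm_eq_seminorm[OF A])
    next
      case False
      then have "0 < anorm A ?w"
        by (simp add: anorm_eq_seminorm[OF A] less_le)
      with sq show ?thesis
        by (simp add: mult_le_cancel_right_pos)
    qed
  qed
  with \<open>0 \<le> c\<close> show ?thesis
    by (auto simp: A_bounded_def)
qed

lemma le_if_pow2_powers_bounded:
  fixes \<rho> K c :: real
  assumes K: "0 < K" and bound: "\<And>n. \<rho> ^ (2 ^ n) \<le> c * K ^ (2 ^ n)"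
  shows "\<rho> \<le> K"
proof (rule ccontr)
  assume "\<not> \<rho> \<le> K"
  define q where "q = \<rho> / K"
  have "1 < q"
    using \<open>\<not> \<rho> \<le> K\<close> K by (simp add: q_def)
  have q_bound: "q ^ (2 ^ n) \<le> c" for n
    using bound[of n] K by (simp add: q_def power_divide pos_divide_le_eq)
  obtain n :: nat where n: "c / (q - 1) < real n"
    using reals_Archimedean2 by blast
  have "1 + real (2 ^ n) * (q - 1) \<le> q ^ (2 ^ n)"
    using Bernoulli_inequality[of "q - 1" "2 ^ n"] \<open>1 < q\<close> by simp
  moreover have "real n * (q - 1) \<le> real (2 ^ n) * (q - 1)"
    using \<open>1 < q\<close> by (intro mult_right_mono) (simp_all add: less_imp_le)
  moreover have "c < real n * (q - 1)"
    using n \<open>1 < q\<close> by (simp add: pos_divide_less_eq)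
  ultimately show False
    using q_bound[of n] by linarith
qed

lemma pow2_power_ratio_le:
  fixes g :: "nat \<Rightarrow> real"
  assumes r: "0 < r" and g: "\<And>n. 0 \<le> g n" and step: "\<And>n. (g n)\<^sup>2 \<le> g (Suc n) * r"
  shows "(g 0 / r) ^ (2 ^ n) \<le> g n / r"
proof (induction n)
  case 0
  then show ?case by simp
next
  case (Suc n)
  have "(g 0 / r) ^ (2 ^ Suc n) = ((g 0 / r) ^ (2 ^ n))\<^sup>2"
    by (simp add: power_mult[symmetric] mult.commute)
  also have "\<dots> \<le> (g n / r)\<^sup>2"
    using Suc.IH g r by (intro power_mono) auto
  also have "\<dots> \<le> g (Suc n) / r"
    using step[of n] r by (simp add: power_divide power2_eq_square divide_right_mono pos_divide_le_eq)
  finally show ?case .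
qed

lemma anorm_le_cnorm:
  assumes A: "positive_op A"
  obtains c where "0 \<le> c" and "\<And>v. anorm A v \<le> c * cnorm v"
proof -
  interpret a: semi_inner "ainner A" cscale
    using A by (rule semi_inner_ainner)
  obtain K where "0 < K" and K: "\<And>x. cnorm (A x) \<le> K * cnorm x"
    using cbounded_linear_pos_bound[OF positive_op_cbounded_linear[OF A]] by blast
  have "anorm A v \<le> sqrt K * cnorm v" for v
  proof -
    have "(anorm A v)\<^sup>2 \<le> cmod (cinner (A v) v)"
      by (simp add: anorm_eq_seminorm[OF A] a.seminorm_sq ainner_def complex_Re_le_cmod)
    also have "\<dots> \<le> cnorm (A v) * cnorm v"
      by (simp add: cnorm_eq_seminorm cinner.cauchy_schwarz)
    also have "\<dots> \<le> K * cnorm v * cnorm v"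
      using K[of v] by (simp add: mult_right_mono)
    also have "\<dots> = (sqrt K * cnorm v)\<^sup>2"
      using \<open>0 < K\<close> by (simp add: power_mult_distrib power2_eq_square[of "cnorm v"])
    finally show ?thesis
      by (rule power2_le_imp_le) (use \<open>0 < K\<close> in simp)
  qed
  with \<open>0 < K\<close> show thesis
    by (intro that[of "sqrt K"]) auto
qed

lemma ainner_funpow_shift:
  fixes T :: "'a::chilbert \<Rightarrow> 'a"
  assumes "\<And>x y. ainner A (T x) y = ainner A x (T y)"
  shows "ainner A ((T ^^ a) x) ((T ^^ b) y) = ainner A ((T ^^ (a + b)) x) y"
proof (induction b arbitrary: a)
  case 0
  then show ?case by simp
next
  case (Suc b)
  have "ainner A ((T ^^ a) x) ((T ^^ Suc b) y) = ainner A ((T ^^ Suc a) x) ((T ^^ b) y)"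
    by (simp add: assms)
  also have "\<dots> = ainner A ((T ^^ (Suc a + b)) x) y"
    by (rule Suc.IH)
  finally show ?case
    by simp
qed

lemma cnorm_funpow_le:
  fixes T :: "'a::chilbert \<Rightarrow> 'a"
  assumes "0 \<le> K" and "\<And>x. cnorm (T x) \<le> K * cnorm x"
  shows "cnorm ((T ^^ m) x) \<le> K ^ m * cnorm x"
proof (induction m)
  case 0
  then show ?case by simp
next
  case (Suc m)
  have "cnorm ((T ^^ Suc m) x) \<le> K * cnorm ((T ^^ m) x)"
    by (simp add: assms(2))
  also have "\<dots> \<le> K * (K ^ m * cnorm x)"
    using Suc.IH assms(1) by (rule mult_left_mono)
  finally show ?case
    by (simp add: mult.assoc)
qed

lemma A_selfadjoint_pow2_sq_le:
  fixes T :: "'a::chilbert \<Rightarrow> 'a"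
  assumes A: "positive_op A" and selfadjoint: "\<And>x y. ainner A (T x) y = ainner A x (T y)"
  shows "(anorm A ((T ^^ (2 ^ n)) z))\<^sup>2 \<le> anorm A ((T ^^ (2 ^ Suc n)) z) * anorm A z"
proof -
  interpret a: semi_inner "ainner A" cscale
    using A by (rule semi_inner_ainner)
  have "(anorm A ((T ^^ (2 ^ n)) z))\<^sup>2 = Re (ainner A ((T ^^ (2 ^ Suc n)) z) z)"
    by (simp add: anorm_eq_seminorm[OF A] a.seminorm_sq ainner_funpow_shift[OF selfadjoint] mult_2)
  also have "\<dots> \<le> cmod (ainner A ((T ^^ (2 ^ Suc n)) z) z)"
    by (rule complex_Re_le_cmod)
  also have "\<dots> \<le> anorm A ((T ^^ (2 ^ Suc n)) z) * anorm A z"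
    unfolding anorm_eq_seminorm[OF A] by (rule a.cauchy_schwarz)
  finally show ?thesis .
qed

text \<open>For A-selfadjoint T, Cauchy-Schwarz gives
  \<parallel>T^(2^n) z\<parallel>_A^2 \<le> \<parallel>T^(2^(n+1)) z\<parallel>_A \<parallel>z\<parallel>_A, hence
  (\<parallel>Tz\<parallel>_A / \<parallel>z\<parallel>_A)^(2^n) \<le> \<parallel>T^(2^n) z\<parallel>_A / \<parallel>z\<parallel>_A, which grows at most like K^(2^n).\<close>
lemma A_selfadjoint_anorm_le:
  assumes A: "positive_op A" and K: "0 < K" "\<And>x. cnorm (T x) \<le> K * cnorm x"
    and selfadjoint: "\<And>x y. ainner A (T x) y = ainner A x (T y)"
  shows "anorm A (T z) \<le> K * anorm A z"
proof -
  interpret a: semi_inner "ainner A" cscale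
    using A by (rule semi_inner_ainner)
  define g where "g n = anorm A ((T ^^ (2 ^ n)) z)" for n
  define r where "r = anorm A z"
  have g_nonneg: "0 \<le> g n" for n
    by (simp add: g_def anorm_eq_seminorm[OF A])
  have step: "(g n)\<^sup>2 \<le> g (Suc n) * r" for n
    unfolding g_def r_def using A selfadjoint by (rule A_selfadjoint_pow2_sq_le)
  have "g 0 = anorm A (T z)"
    by (simp add: g_def)
  show ?thesis
  proof (cases "r = 0")
    case True
    with step[of 0] g_nonneg[of 0] show ?thesis
      using \<open>g 0 = anorm A (T z)\<close> r_def by simp
  next
    case False
    then have "0 < r"
      by (simp add: r_def anorm_eq_seminorm[OF A] less_le)
    obtain c where "0 \<le> c" and c: "\<And>v. anorm A v \<le> c * cnorm v"
      using anorm_le_cnorm[OF A] by blast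
    have "(g 0 / r) ^ (2 ^ n) \<le> (c * cnorm z / r) * K ^ (2 ^ n)" for n
    proof -
      have "g n \<le> c * cnorm ((T ^^ (2 ^ n)) z)"
        unfolding g_def by (rule c)
      also have "\<dots> \<le> c * (K ^ (2 ^ n) * cnorm z)"
        using K by (intro mult_left_mono[OF cnorm_funpow_le] \<open>0 \<le> c\<close>) auto
      finally have "g n / r \<le> (c * cnorm z / r) * K ^ (2 ^ n)"
        using \<open>0 < r\<close> by (simp add: divide_right_mono mult_ac)
      with pow2_power_ratio_le[of r g, OF \<open>0 < r\<close> g_nonneg step] show ?thesis
        by (rule order_trans)
    qed
    then have "g 0 / r \<le> K"
      by (rule le_if_pow2_powers_bounded[OF K(1)])
    with \<open>0 < r\<close> \<open>g 0 = anorm A (T z)\<close> show ?thesis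
      by (simp add: r_def pos_divide_le_eq)
  qed
qed

lemma has_A_adjoint_A_bounded:
  assumes A: "positive_op A" and S: "has_A_adjoint A S"
  shows "A_bounded A S"
proof -
  interpret a: semi_inner "ainner A" cscale
    using A by (rule semi_inner_ainner)
  obtain W where W_lin: "cbounded_linear W" and W: "\<And>x y. ainner A (S x) y = ainner A x (W y)"
    and S_lin: "cbounded_linear S"
    using S by (auto simp: has_A_adjoint_def)
  obtain K where "0 < K" and K: "\<And>x. cnorm (W (S x)) \<le> K * cnorm x"
    using cbounded_linear_pos_bound[OF cbounded_linear_comp[OF W_lin S_lin]] by auto
  have WS: "ainner A (W (S x)) y = ainner A (S x) (S y)" for x y
    by (metis W a.hermitian)
  then have "ainner A (W (S x)) y = ainner A x (W (S y))" for x y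
    by (simp add: W)
  with A \<open>0 < K\<close> K have WS_bound: "anorm A (W (S z)) \<le> K * anorm A z" for z
    by (rule A_selfadjoint_anorm_le)
  have "anorm A (S z) \<le> sqrt K * anorm A z" for z
  proof -
    have "(anorm A (S z))\<^sup>2 \<le> cmod (ainner A (W (S z)) z)"
      by (simp add: anorm_eq_seminorm[OF A] a.seminorm_sq WS complex_Re_le_cmod)
    also have "\<dots> \<le> anorm A (W (S z)) * anorm A z"
      unfolding anorm_eq_seminorm[OF A] by (rule a.cauchy_schwarz)
    also have "\<dots> \<le> K * anorm A z * anorm A z"
      using WS_bound[of z] by (simp add: anorm_eq_seminorm[OF A] mult_right_mono)
    also have "\<dots> = (sqrt K * anorm A z)\<^sup>2"
      using \<open>0 < K\<close> by (simp add: power_mult_distrib power2_eq_square[of "anorm A z"])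
    finally show ?thesis
      by (rule power2_le_imp_le) (use \<open>0 < K\<close> in \<open>simp add: anorm_eq_seminorm[OF A]\<close>)
  qed
  with \<open>0 < K\<close> show ?thesis
    by (auto simp: A_bounded_def intro!: exI[of _ "sqrt K"])
qed

section \<open>Numerical and Davis-Wielandt radii\<close>

lemma omegaA_set_bdd_above:
  assumes A: "positive_op A" and T: "A_bounded A T"
  shows "bdd_above (insert 0 {cmod (ainner A (T z) z) | z. anorm A z = 1})"
proof -
  interpret a: semi_inner "ainner A" cscale
    using A by (rule semi_inner_ainner)
  obtain c where "0 \<le> c" and c: "\<And>z. anorm A (T z) \<le> c * anorm A z"
    using A_boundedE[OF T] by blast
  have "cmod (ainner A (T z) z) \<le> c" if "anorm A z = 1" for z
    using a.cauchy_schwarz[of "T z" z] c[of z] that by (simp add: anorm_eq_seminorm[OF A])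
  with \<open>0 \<le> c\<close> show ?thesis
    by (auto intro: bdd_aboveI[of _ c])
qed

lemma omegaA_nonneg:
  assumes "positive_op A" and "A_bounded A T"
  shows "0 \<le> omegaA A T"
  unfolding omegaA_def by (rule cSup_upper[OF _ omegaA_set_bdd_above[OF assms]]) simp

lemma ainner_le_omegaA:
  assumes A: "positive_op A" and T: "A_bounded A T" and hom: "\<And>a z. T (cscale a z) = cscale a (T z)"
  shows "cmod (ainner A (T z) z) \<le> omegaA A T * (anorm A z)\<^sup>2"
proof -
  interpret a: semi_inner "ainner A" cscale
    using A by (rule semi_inner_ainner)
  show ?thesis
  proof (cases "anorm A z = 0")
    case True
    then show ?thesis
      using a.cauchy_schwarz[of "T z" z] by (simp add: anorm_eq_seminorm[OF A])
  next
    case False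
    define t where "t = complex_of_real (1 / anorm A z)"
    have "0 < anorm A z"
      using False by (simp add: anorm_eq_seminorm[OF A] less_le)
    then have t: "cmod t * anorm A z = 1"
      by (simp add: t_def norm_divide)
    then have "anorm A (cscale t z) = 1"
      by (simp add: anorm_eq_seminorm[OF A] a.seminorm_scale)
    then have "cmod (ainner A (T (cscale t z)) (cscale t z)) \<le> omegaA A T"
      unfolding omegaA_def by (intro cSup_upper[OF _ omegaA_set_bdd_above[OF A T]]) blast
    moreover have "ainner A (T (cscale t z)) (cscale t z) = (t * cnj t) * ainner A (T z) z"
      by (simp add: hom a.scale_left a.scale_right)
    then have "cmod (ainner A (T (cscale t z)) (cscale t z)) = (cmod t)\<^sup>2 * cmod (ainner A (T z) z)"
      by (simp add: norm_mult power2_eq_square)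
    ultimately have "(cmod t * anorm A z)\<^sup>2 * cmod (ainner A (T z) z) \<le> omegaA A T * (anorm A z)\<^sup>2"
      using \<open>0 < anorm A z\<close> by (simp add: power_mult_distrib mult_right_mono mult.commute mult.left_commute)
    with t show ?thesis
      by simp
  qed
qed

lemma omegaA_gram_bounds:
  fixes P :: "'a::chilbert \<Rightarrow> 'a"
  assumes A: "positive_op A" and P: "A_bounded A P" and hom: "\<And>a z. P (cscale a z) = cscale a (P z)"
    and form1: "\<And>x. ainner A (P x) x = complex_of_real (n x)"
    and form2: "\<And>x. ainner A (P (P x)) x = complex_of_real (m x)"
  shows "m x + n x \<le> omegaA A (\<lambda>z. P (P z) + P z) * (anorm A x)\<^sup>2"
    and "n x + m x \<le> omegaA A (\<lambda>z. P z + P (P z)) * (anorm A x)\<^sup>2"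
    and "\<bar>m x - n x\<bar> \<le> omegaA A (\<lambda>z. P (P z) - P z) * (anorm A x)\<^sup>2"
    and "\<bar>n x - m x\<bar> \<le> omegaA A (\<lambda>z. P z - P (P z)) * (anorm A x)\<^sup>2"
    and "0 \<le> omegaA A (\<lambda>z. P (P z) + P z)"
    and "0 \<le> omegaA A (\<lambda>z. P (P z) - P z)"
proof -
  interpret a: semi_inner "ainner A" cscale
    using A by (rule semi_inner_ainner)
  have PP: "A_bounded A (\<lambda>z. P (P z))"
    using P P by (rule A_bounded_comp)
  have hom_poly: "P (P (cscale a z)) + P (cscale a z) = cscale a (P (P z) + P z)"
    "P (cscale a z) + P (P (cscale a z)) = cscale a (P z + P (P z))"
    "P (P (cscale a z)) - P (cscale a z) = cscale a (P (P z) - P z)"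
    "P (cscale a z) - P (P (cscale a z)) = cscale a (P z - P (P z))" for a z
    by (simp_all add: hom cscale_add_right cscale_diff)
  have "\<bar>m x + n x\<bar> \<le> omegaA A (\<lambda>z. P (P z) + P z) * (anorm A x)\<^sup>2"
    using ainner_le_omegaA[OF A A_bounded_add_diff(1)[OF A PP P] hom_poly(1), of x]
    by (simp add: a.add_left form1 form2 flip: of_real_add)
  then show "m x + n x \<le> omegaA A (\<lambda>z. P (P z) + P z) * (anorm A x)\<^sup>2"
    by linarith
  have "\<bar>n x + m x\<bar> \<le> omegaA A (\<lambda>z. P z + P (P z)) * (anorm A x)\<^sup>2"
    using ainner_le_omegaA[OF A A_bounded_add_diff(1)[OF A P PP] hom_poly(2), of x]
    by (simp add: a.add_left form1 form2 flip: of_real_add)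
  then show "n x + m x \<le> omegaA A (\<lambda>z. P z + P (P z)) * (anorm A x)\<^sup>2"
    by linarith
  show "\<bar>m x - n x\<bar> \<le> omegaA A (\<lambda>z. P (P z) - P z) * (anorm A x)\<^sup>2"
    using ainner_le_omegaA[OF A A_bounded_add_diff(2)[OF A PP P] hom_poly(3), of x]
    by (simp add: a.diff_left form1 form2 flip: of_real_diff)
  show "\<bar>n x - m x\<bar> \<le> omegaA A (\<lambda>z. P z - P (P z)) * (anorm A x)\<^sup>2"
    using ainner_le_omegaA[OF A A_bounded_add_diff(2)[OF A P PP] hom_poly(4), of x]
    by (simp add: a.diff_left form1 form2 flip: of_real_diff)
  show "0 \<le> omegaA A (\<lambda>z. P (P z) + P z)" and "0 \<le> omegaA A (\<lambda>z. P (P z) - P z)"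
    using A_bounded_add_diff[OF A PP P] by (simp_all add: omegaA_nonneg[OF A])
qed

lemma sharpA_gram_properties:
  assumes A: "positive_op A" and S: "has_A_adjoint A S"
  shows "A_bounded A (\<lambda>z. sharpA A S (S z))"
    and "sharpA A S (S (cscale a z)) = cscale a (sharpA A S (S z))"
    and "ainner A (sharpA A S (S x)) x = complex_of_real ((anorm A (S x))\<^sup>2)"
    and "ainner A (sharpA A S (S (sharpA A S (S x)))) x = complex_of_real ((anorm A (sharpA A S (S x)))\<^sup>2)"
proof -
  interpret a: semi_inner "ainner A" cscale
    using A by (rule semi_inner_ainner)
  have "A_bounded A S"
    using A S by (rule has_A_adjoint_A_bounded)
  then show "A_bounded A (\<lambda>z. sharpA A S (S z))"
    using A_bounded_sharpA[OF A S] A_bounded_comp by blast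
  show "sharpA A S (S (cscale a z)) = cscale a (sharpA A S (S z))"
    using S by (simp add: has_A_adjoint_def cbounded_linear_cscale sharpA_cscale[OF A S])
  have gram: "ainner A x x = complex_of_real ((anorm A x)\<^sup>2)" for x
    by (simp add: anorm_eq_seminorm[OF A] a.seminorm_sq flip: a.self_eq_Re)
  show "ainner A (sharpA A S (S x)) x = complex_of_real ((anorm A (S x))\<^sup>2)"
    by (simp add: ainner_sharpA_left[OF A S] gram)
  show "ainner A (sharpA A S (S (sharpA A S (S x)))) x = complex_of_real ((anorm A (sharpA A S (S x)))\<^sup>2)"
    by (simp add: ainner_sharpA_left[OF A S] gram flip: ainner_sharpA_right[OF A S])
qed

lemma a0norm_sq:
  assumes A: "positive_op A"
  shows "(a0norm A z)\<^sup>2 = (anorm A (fst z))\<^sup>2 + (anorm A (snd z))\<^sup>2"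
proof -
  interpret a: semi_inner "ainner A" cscale
    using A by (rule semi_inner_ainner)
  interpret a0: semi_inner "a0inner A" "\<lambda>a z. (cscale a (fst z), cscale a (snd z))"
    using A by (rule semi_inner_a0inner)
  show ?thesis
    by (simp add: a0norm_eq_seminorm[OF A] anorm_eq_seminorm[OF A] a0.seminorm_sq a.seminorm_sq a0inner_def)
qed

lemma offdiag_apply: "offdiag S T z = (S (snd z), T (fst z))"
  by (simp add: offdiag_def case_prod_beta)

lemma offdiag_a0norm_le:
  assumes A: "positive_op A" and "A_bounded A S" and "A_bounded A T"
  obtains e where "\<And>z. a0norm A (offdiag S T z) \<le> e * a0norm A z"
proof -
  interpret a: semi_inner "ainner A" cscale
    using A by (rule semi_inner_ainner)
  interpret a0: semi_inner "a0inner A" "\<lambda>a z. (cscale a (fst z), cscale a (snd z))"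
    using A by (rule semi_inner_a0inner)
  obtain c d where "0 \<le> c" "\<And>z. anorm A (S z) \<le> c * anorm A z"
    and "0 \<le> d" "\<And>z. anorm A (T z) \<le> d * anorm A z"
    using assms by (metis A_boundedE)
  moreover have "c * anorm A u \<le> (c + d) * anorm A u" and "d * anorm A u \<le> (c + d) * anorm A u" for u
    using \<open>0 \<le> c\<close> \<open>0 \<le> d\<close> by (simp_all add: mult_right_mono anorm_eq_seminorm[OF A])
  ultimately have "anorm A (S u) \<le> (c + d) * anorm A u" and "anorm A (T u) \<le> (c + d) * anorm A u" for u
    by (meson order_trans)+
  then have S_sq: "(anorm A (S u))\<^sup>2 \<le> (c + d)\<^sup>2 * (anorm A u)\<^sup>2"
    and T_sq: "(anorm A (T u))\<^sup>2 \<le> (c + d)\<^sup>2 * (anorm A u)\<^sup>2" for u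
    by (metis anorm_eq_seminorm[OF A] a.seminorm_nonneg power_mono power_mult_distrib)+
  have "(a0norm A (offdiag S T z))\<^sup>2 \<le> ((c + d) * a0norm A z)\<^sup>2" for z
  proof -
    have "(a0norm A (offdiag S T z))\<^sup>2 = (anorm A (S (snd z)))\<^sup>2 + (anorm A (T (fst z)))\<^sup>2"
      by (simp add: offdiag_apply a0norm_sq[OF A])
    also have "\<dots> \<le> (c + d)\<^sup>2 * (anorm A (snd z))\<^sup>2 + (c + d)\<^sup>2 * (anorm A (fst z))\<^sup>2"
      by (intro add_mono S_sq T_sq)
    also have "\<dots> = ((c + d) * a0norm A z)\<^sup>2"
      by (simp only: power_mult_distrib a0norm_sq[OF A]) (simp add: algebra_simps)
    finally show ?thesis .
  qed
  then have "a0norm A (offdiag S T z) \<le> (c + d) * a0norm A z" for z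
    by (rule power2_le_imp_le) (simp add: a0norm_eq_seminorm[OF A] \<open>0 \<le> c\<close> \<open>0 \<le> d\<close>)
  then show thesis
    by (rule that)
qed

lemma omegaA0_offdiag_ge:
  assumes A: "positive_op A" and "A_bounded A S" and "A_bounded A T"
  shows "0 \<le> omegaA0 A (offdiag S T)"
    and "a0norm A z = 1 \<Longrightarrow> cmod (a0inner A (offdiag S T z) z) \<le> omegaA0 A (offdiag S T)"
proof -
  interpret a0: semi_inner "a0inner A" "\<lambda>a z. (cscale a (fst z), cscale a (snd z))"
    using A by (rule semi_inner_a0inner)
  obtain e where e: "\<And>z. a0norm A (offdiag S T z) \<le> e * a0norm A z"
    using offdiag_a0norm_le[OF assms] by blast
  have "cmod (a0inner A (offdiag S T z) z) \<le> e" if "a0norm A z = 1" for z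
    using a0.cauchy_schwarz[of "offdiag S T z" z] e[of z] that by (simp add: a0norm_eq_seminorm[OF A])
  then have bdd: "bdd_above (insert 0 {cmod (a0inner A (offdiag S T z) z) | z. a0norm A z = 1})"
    by (auto intro!: bdd_aboveI[of _ e])
  show "0 \<le> omegaA0 A (offdiag S T)"
    unfolding omegaA0_def by (rule cSup_upper[OF _ bdd]) simp
  show "cmod (a0inner A (offdiag S T z) z) \<le> omegaA0 A (offdiag S T)" if "a0norm A z = 1"
    unfolding omegaA0_def by (rule cSup_upper[OF _ bdd]) (use that in blast)
qed

lemma dwA0_sq_le:
  assumes "0 \<le> R"
    and bound: "\<And>z. a0norm A z = 1 \<Longrightarrow> (cmod (a0inner A (X z) z))\<^sup>2 + (a0norm A (X z)) ^ 4 \<le> R"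
  shows "(dwA0 A X)\<^sup>2 \<le> R"
proof -
  define D where "D = insert 0 {sqrt ((cmod (a0inner A (X z) z))\<^sup>2 + (a0norm A (X z)) ^ 4) | z. a0norm A z = 1}"
  have "sqrt ((cmod (a0inner A (X z) z))\<^sup>2 + (a0norm A (X z)) ^ 4) \<le> sqrt R" if "a0norm A z = 1" for z
    using bound[OF that] by (rule real_sqrt_le_mono)
  moreover have "0 \<le> sqrt R"
    using \<open>0 \<le> R\<close> by simp
  ultimately have D_le: "d \<le> sqrt R" if "d \<in> D" for d
    using that unfolding D_def by blast
  have "0 \<in> D"
    by (simp add: D_def)
  then have "Sup D \<le> sqrt R"
    using D_le by (intro cSup_least) auto
  moreover have "0 \<le> Sup D"
    using \<open>0 \<in> D\<close> bdd_aboveI[of D "sqrt R", OF D_le] by (rule cSup_upper)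
  ultimately have "(Sup D)\<^sup>2 \<le> R"
    using \<open>0 \<le> R\<close> by (metis power_mono real_sqrt_pow2)
  then show ?thesis
    by (simp add: dwA0_def D_def)
qed

section \<open>The off-diagonal estimate\<close>

lemma offdiag_dw_form_le:
  assumes A: "positive_op A" and B: "has_A_adjoint A B" and C: "has_A_adjoint A C"
    and z: "a0norm A z = 1"
  shows "(cmod (a0inner A (offdiag B C z) z))\<^sup>2 + (a0norm A (offdiag B C z)) ^ 4
    \<le> max ((anorm A (C (fst z)))\<^sup>2 + (anorm A (B (snd z)))\<^sup>2)
          ((anorm A (sharpA A C (C (fst z))))\<^sup>2 + (anorm A (sharpA A B (B (snd z))))\<^sup>2)
      + cmod (a0inner A (offdiag (\<lambda>z. sharpA A C (C (B z))) (\<lambda>z. sharpA A B (B (C z))) z) z)"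
proof -
  interpret a: semi_inner "ainner A" cscale
    using A by (rule semi_inner_ainner)
  interpret a0: semi_inner "a0inner A" "\<lambda>a z. (cscale a (fst z), cscale a (snd z))"
    using A by (rule semi_inner_a0inner)
  define a where "a = offdiag B C z"
  define b where "b = (sharpA A C (C (fst z)), sharpA A B (B (snd z)))"
  have gram: "Re (ainner A x x) = (anorm A x)\<^sup>2" for x
    by (simp add: anorm_eq_seminorm[OF A] a.seminorm_sq)
  have "Re (a0inner A z z) = 1"
    using z by (simp add: a0norm_eq_seminorm[OF A] flip: a0.seminorm_sq)
  then have "(cmod (a0inner A a z))\<^sup>2 + (cmod (a0inner A b z))\<^sup>2
      \<le> max (Re (a0inner A a a)) (Re (a0inner A b b)) + cmod (a0inner A a b)"
    by (rule a0.bombieri)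
  moreover have "(cmod (a0inner A b z))\<^sup>2 = (a0norm A a) ^ 4"
  proof -
    have "a0inner A b z = complex_of_real ((a0norm A a)\<^sup>2)"
      by (simp add: a_def b_def offdiag_apply a0inner_def a0norm_sq[OF A] sharpA_gram_properties(3)[OF A B]
          sharpA_gram_properties(3)[OF A C] add.commute)
    then show ?thesis
      by (simp add: norm_power)
  qed
  moreover have "Re (a0inner A a a) = (anorm A (C (fst z)))\<^sup>2 + (anorm A (B (snd z)))\<^sup>2"
    by (simp add: a_def offdiag_apply a0inner_def gram add.commute)
  moreover have "Re (a0inner A b b) = (anorm A (sharpA A C (C (fst z))))\<^sup>2 + (anorm A (sharpA A B (B (snd z))))\<^sup>2"
    by (simp add: b_def a0inner_def gram)
  moreover have "a0inner A a b = a0inner A (offdiag (\<lambda>z. sharpA A C (C (B z))) (\<lambda>z. sharpA A B (B (C z))) z) z"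
    by (simp add: a_def b_def offdiag_apply a0inner_def ainner_sharpA_left[OF A] ainner_sharpA_right[OF A] B C
        add.commute)
  ultimately show ?thesis
    unfolding a_def by (simp only:)
qed

lemma max_le_half_max_plus_half_max:
  fixes a b u1 u2 v1 v2 p1 p2 q1 q2 :: real
  assumes "0 \<le> a" "0 \<le> b" "a + b = 1"
    and "v1 + u1 \<le> p1 * a" "u2 + v2 \<le> p2 * b" "\<bar>v1 - u1\<bar> \<le> q1 * a" "\<bar>u2 - v2\<bar> \<le> q2 * b"
  shows "max (u1 + u2) (v1 + v2) \<le> 1/2 * max p1 p2 + 1/2 * max q1 q2"
proof -
  have convex: "r1 * a + r2 * b \<le> max r1 r2" for r1 r2 :: real
  proof -
    have "r1 * a + r2 * b \<le> max r1 r2 * a + max r1 r2 * b"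
      using assms(1,2) by (intro add_mono mult_right_mono) auto
    also have "\<dots> = max r1 r2"
      using assms(3) by (simp flip: distrib_left)
    finally show ?thesis .
  qed
  have "max (u1 + u2) (v1 + v2) = ((u1 + u2) + (v1 + v2)) / 2 + \<bar>(u1 + u2) - (v1 + v2)\<bar> / 2"
    by (simp add: max_def abs_if field_simps)
  moreover have "\<bar>(u1 + u2) - (v1 + v2)\<bar> \<le> \<bar>u2 - v2\<bar> + \<bar>v1 - u1\<bar>"
    using abs_triangle_ineq4[of "u2 - v2" "v1 - u1"] by (simp add: algebra_simps)
  ultimately show ?thesis
    using convex[of p1 p2] convex[of q1 q2] assms(4-7) by linarith
qed

theorem theorem3p8:
  fixes A B C :: "'a::chilbert \<Rightarrow> 'a"
  assumes "positive_op A"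
    and "has_A_adjoint A B" and "has_A_adjoint A C"
  shows "(dwA0 A (offdiag B C))\<^sup>2 \<le>
      1/2 * max (omegaA A (\<lambda>z. sharpA A C (C (sharpA A C (C z))) + sharpA A C (C z)))
                (omegaA A (\<lambda>z. sharpA A B (B z) + sharpA A B (B (sharpA A B (B z)))))
    + 1/2 * max (omegaA A (\<lambda>z. sharpA A C (C (sharpA A C (C z))) - sharpA A C (C z)))
                (omegaA A (\<lambda>z. sharpA A B (B z) - sharpA A B (B (sharpA A B (B z)))))
    + omegaA0 A (offdiag (\<lambda>z. sharpA A C (C (B z))) (\<lambda>z. sharpA A B (B (C z))))"
proof -
  note A = assms(1) and B = assms(2) and C = assms(3)
  note C_bounds = omegaA_gram_bounds[OF A sharpA_gram_properties[OF A C]]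
  note B_bounds = omegaA_gram_bounds[OF A sharpA_gram_properties[OF A B]]
  note offdiag_bounds = omegaA0_offdiag_ge[OF A
      A_bounded_comp[OF sharpA_gram_properties(1)[OF A C] has_A_adjoint_A_bounded[OF A B]]
      A_bounded_comp[OF sharpA_gram_properties(1)[OF A B] has_A_adjoint_A_bounded[OF A C]]]
  show ?thesis
  proof (rule dwA0_sq_le, goal_cases)
    case 1
    show ?case
      using C_bounds(5,6) offdiag_bounds(1) by (simp add: le_max_iff_disj)
  next
    case (2 z)
    then have "(anorm A (fst z))\<^sup>2 + (anorm A (snd z))\<^sup>2 = 1"
      by (simp flip: a0norm_sq[OF A])
    from max_le_half_max_plus_half_max[OF zero_le_power2 zero_le_power2 this
        C_bounds(1) B_bounds(2) C_bounds(3) B_bounds(4)]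
    show ?case
      using offdiag_dw_form_le[OF A B C 2] offdiag_bounds(2)[OF 2] by linarith
  qed
qed

end
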